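(* Let $0<\delta<\frac12$, let $f\in\mathrm{Diff}_+^{1,\delta}(I)$, and let $G\subseteq\mathrm{Diff}_0^3(I)$ satisfy condition (a): there exists $c>0$ such that for all $g_1\ne g_2$ in $G$, $\sup_{t\in[0,1]}|\log(g_1'(t))-\log(g_2'(t))|\ge c$. Then for every $C>0$ the set $\{g\in G: p_\delta(g\circ f)\le C\}$ is finite.
   Context: $I=[0,1]$. $\mathrm{Diff}_+^1(I)$ is the set of $C^1$ diffeomorphisms of $I$ fixing $0$ and $1$; $\mathrm{Diff}_+^{1,\delta}(I)$ is the set of $f\in\mathrm{Diff}_+^1(I)$ with $f'$ Hölder of exponent $\delta$. $\mathrm{Diff}_0^3(I)$ is the set of $C^3$ diffeomorphisms $f$ of $I$ fixing $0$ and $1$ with $f'(0)=f'(1)=1$. For $f\in\mathrm{Diff}_+^{1,\delta}(I)$, $p_\delta(f)=|\log(f'(0))|+\sup_{t_1\ne t_2\in I}\frac{|\log(f'(t_2))-\log(f'(t_1))|}{|t_2-t_1|^\delta}$. *)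

theory Defs
  imports "HOL-Analysis.Analysis"
begin

abbreviation I01 :: "real set" where "I01 \<equiv> {0..1}"

definition dI :: "(real \<Rightarrow> real) \<Rightarrow> real \<Rightarrow> real" where
  "dI f t = vector_derivative f (at t within I01)"

fun nderI :: "nat \<Rightarrow> (real \<Rightarrow> real) \<Rightarrow> real \<Rightarrow> real" where
  "nderI 0 f = f"
| "nderI (Suc n) f = dI (nderI n f)"

definition Ck_on_I :: "nat \<Rightarrow> (real \<Rightarrow> real) \<Rightarrow> bool" where
  "Ck_on_I k f \<longleftrightarrow>
     (\<forall>j<k. \<forall>t\<in>I01. (nderI j f) differentiable (at t within I01))
     \<and> continuous_on I01 (nderI k f)"

definition Diff1p :: "(real \<Rightarrow> real) set" where
  "Diff1p = {f. bij_betw f I01 I01 \<and> f 0 = 0 \<and> f 1 = 1 \<and>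
                Ck_on_I 1 f \<and> Ck_on_I 1 (inv_into I01 f)}"

definition Diff1d :: "real \<Rightarrow> (real \<Rightarrow> real) set" where
  "Diff1d \<delta> = {f \<in> Diff1p. \<exists>K. \<forall>s\<in>I01. \<forall>t\<in>I01.
                  \<bar>dI f s - dI f t\<bar> \<le> K * \<bar>s - t\<bar> powr \<delta>}"

definition Diff03 :: "(real \<Rightarrow> real) set" where
  "Diff03 = {f. bij_betw f I01 I01 \<and> f 0 = 0 \<and> f 1 = 1 \<and>
                Ck_on_I 3 f \<and> Ck_on_I 3 (inv_into I01 f) \<and>
                dI f 0 = 1 \<and> dI f 1 = 1}"

definition p_delta :: "real \<Rightarrow> (real \<Rightarrow> real) \<Rightarrow> real" where
  "p_delta \<delta> f = \<bar>ln (dI f 0)\<bar> +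
     (SUP p\<in>{(t1, t2). t1 \<in> I01 \<and> t2 \<in> I01 \<and> t1 \<noteq> t2}.
        \<bar>ln (dI f (snd p)) - ln (dI f (fst p))\<bar> / \<bar>snd p - fst p\<bar> powr \<delta>)"

end

theory Submission
  imports Defs
begin

(*
  For g in the set, h_g = log g' \<circ> f vanishes at 0 and is \<delta>-Hoelder with a constant C + L
  independent of g: the chain rule splits log (g \<circ> f)' = h_g + log f', and L is a Hoelder constant
  of log f'. Such a family is totally bounded in the sup norm: once N is large, rounding the values
  of h_g at the points i/N to multiples of c/4 determines h_g up to c/2 everywhere. Since f is onto,
  condition (a) says that distinct g give functions h_g at sup-distance at least c, so the rounding
  map is injective into a finite set.
*)

lemma has_vector_derivative_dI:
  "f differentiable (at t within I01) \<Longrightarrow> (f has_vector_derivative dI f t) (at t within I01)"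
  unfolding dI_def by (rule vector_derivative_works[THEN iffD1])

lemma dI_eqI:
  assumes "t \<in> I01" "(f has_vector_derivative D) (at t within I01)"
  shows "dI f t = D"
  using vector_derivative_within_cbox[of 0 1 t f D] assms unfolding dI_def
  by (simp add: cbox_interval)

lemma nderI_dI: "nderI n (dI f) = nderI (Suc n) f"
  by (induction n) simp_all

lemma Ck_on_I_Suc_imp_Ck_on_I:
  assumes "Ck_on_I (Suc k) f" shows "Ck_on_I k f"
proof -
  have "\<forall>t\<in>I01. nderI k f differentiable (at t within I01)"
    using assms unfolding Ck_on_I_def by blast
  then have "continuous_on I01 (nderI k f)"
    by (meson continuous_on_eq_continuous_within differentiable_imp_continuous_within)
  with assms show ?thesis unfolding Ck_on_I_def by simp
qed

lemma Ck_on_I_mono: "k \<le> m \<Longrightarrow> Ck_on_I m f \<Longrightarrow> Ck_on_I k f"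
  by (induction m rule: dec_induct) (auto intro: Ck_on_I_Suc_imp_Ck_on_I)

lemma Ck_on_I_Suc_dI: "Ck_on_I (Suc k) f \<Longrightarrow> Ck_on_I k (dI f)"
  unfolding Ck_on_I_def nderI_dI by auto

lemma C1_on_I_has_vector_derivative:
  "Ck_on_I 1 f \<Longrightarrow> t \<in> I01 \<Longrightarrow> (f has_vector_derivative dI f t) (at t within I01)"
  unfolding Ck_on_I_def by (auto intro: has_vector_derivative_dI)

lemma C1_on_I_continuous_dI: "Ck_on_I 1 f \<Longrightarrow> continuous_on I01 (dI f)"
  unfolding Ck_on_I_def by simp

lemma continuous_on_compact_pos_lower_bound:
  fixes h :: "'a::topological_space \<Rightarrow> real"
  assumes "compact S" "continuous_on S h" "\<And>t. t \<in> S \<Longrightarrow> 0 < h t"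
  shows "\<exists>m>0. \<forall>t\<in>S. m \<le> h t"
proof (cases "S = {}")
  case False
  then obtain x where "x \<in> S" "\<forall>y\<in>S. h x \<le> h y"
    using continuous_attains_inf[OF assms(1) _ assms(2)] by auto
  then show ?thesis using assms(3) by blast
qed (auto intro: exI[of _ 1])

lemma C1_on_I_lipschitz:
  assumes "Ck_on_I 1 h" shows "\<exists>M. M-lipschitz_on I01 h"
proof -
  obtain M where M: "\<And>t. t \<in> I01 \<Longrightarrow> \<bar>dI h t\<bar> \<le> M"
    using compact_imp_bounded[OF compact_continuous_image[OF C1_on_I_continuous_dI[OF assms] compact_Icc]]
    unfolding bounded_iff by fastforce
  have "M-lipschitz_on I01 h"
  proof (rule bounded_derivative_imp_lipschitz)
    show "(h has_derivative (\<lambda>u. u *\<^sub>R dI h t)) (at t within I01)" if "t \<in> I01" for t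
      using C1_on_I_has_vector_derivative[OF assms that] unfolding has_vector_derivative_def .
    show "onorm (\<lambda>u. u *\<^sub>R dI h t) \<le> M" if "t \<in> I01" for t
      using M[OF that] onorm_scaleR_left[OF bounded_linear_ident, of "dI h t"] by (simp add: onorm_id)
    show "0 \<le> M" using M[of 0] by simp
  qed (rule convex_real_interval)
  then show ?thesis ..
qed

lemma dI_comp:
  assumes "Ck_on_I 1 f" "Ck_on_I 1 g" "f ` I01 \<subseteq> I01" "t \<in> I01"
  shows "dI (g \<circ> f) t = dI g (f t) * dI f t"
proof -
  have "(g has_vector_derivative dI g (f t)) (at (f t) within f ` I01)"
    using C1_on_I_has_vector_derivative[OF assms(2)] assms(3,4)
    by (blast intro: has_vector_derivative_within_subset)
  from vector_diff_chain_within[OF C1_on_I_has_vector_derivative[OF assms(1,4)] this]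
  show ?thesis using dI_eqI[OF assms(4)] by (simp add: mult.commute)
qed

lemma Diff1p_dI_nonzero:
  assumes "f \<in> Diff1p" "t \<in> I01"
  shows "dI f t \<noteq> 0"
proof -
  let ?g = "inv_into I01 f"
  have f: "bij_betw f I01 I01" "Ck_on_I 1 f" "Ck_on_I 1 ?g"
    using assms(1) unfolding Diff1p_def by auto
  then have "f ` I01 = I01" "\<And>x. x \<in> I01 \<Longrightarrow> (?g \<circ> f) x = x"
    by (auto simp: bij_betw_def inv_into_f_f)
  then have "((?g \<circ> f) has_vector_derivative 1) (at t within I01)"
    by (intro has_vector_derivative_transform[OF assms(2) _ has_vector_derivative_id]) simp
  then have "dI (?g \<circ> f) t = 1"
    by (rule dI_eqI[OF assms(2)])
  then show ?thesis using dI_comp[OF f(2,3)] \<open>f ` I01 = I01\<close> assms(2) by force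
qed

lemma Diff1p_dI_pos:
  assumes "f \<in> Diff1p" "t \<in> I01"
  shows "0 < dI f t"
proof (rule ccontr)
  assume "\<not> 0 < dI f t"
  have f: "Ck_on_I 1 f" "f 0 = 0" "f 1 = 1" using assms(1) unfolding Diff1p_def by auto
  have "\<exists>z\<in>{0..1}. f 1 - f 0 = (\<lambda>u. u * dI f z) (1 - 0)"
    using C1_on_I_has_vector_derivative[OF f(1)]
    by (intro mvt_very_simple) (auto simp: has_vector_derivative_def)
  then obtain z where "z \<in> I01" "dI f z = 1" using f by auto
  moreover have "connected (dI f ` I01)"
    by (intro connected_continuous_image C1_on_I_continuous_dI f(1) connected_Icc)
  ultimately have "{dI f t..1} \<subseteq> dI f ` I01"
    using assms(2) by (metis connected_contains_Icc image_eqI)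
  moreover have "0 \<in> {dI f t..1}" using \<open>\<not> 0 < dI f t\<close> by simp
  ultimately have "0 \<in> dI f ` I01" by (rule subsetD)
  then obtain x where "0 = dI f x" "x \<in> I01" by (rule imageE)
  then show False using Diff1p_dI_nonzero[OF assms(1)] by metis
qed

lemma Diff1p_dI_lower_bound:
  assumes "f \<in> Diff1p" shows "\<exists>m>0. \<forall>t\<in>I01. m \<le> dI f t"
  using assms Diff1p_dI_pos unfolding Diff1p_def
  by (blast intro: continuous_on_compact_pos_lower_bound compact_Icc C1_on_I_continuous_dI)

lemma Diff03_subset_Diff1p: "Diff03 \<subseteq> Diff1p"
proof -
  have "Ck_on_I 1 f" if "Ck_on_I 3 f" for f
    using Ck_on_I_mono[OF _ that, of 1] by simp
  then show ?thesis unfolding Diff03_def Diff1p_def by blast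
qed

lemma abs_ln_diff_le:
  fixes a b m :: real
  assumes "0 < m" "m \<le> a" "m \<le> b"
  shows "\<bar>ln a - ln b\<bar> \<le> \<bar>a - b\<bar> / m"
proof -
  have "ln x - ln y \<le> \<bar>x - y\<bar> / m" if "m \<le> x" "m \<le> y" for x y
  proof -
    have "ln x - ln y = ln (x / y)" using that assms by (simp add: ln_div)
    also have "\<dots> \<le> x / y - 1" using that assms by (intro ln_le_minus_one) simp
    also have "\<dots> = (x - y) / y" using that assms by (simp add: field_simps)
    also have "\<dots> \<le> \<bar>x - y\<bar> / m" using that assms
      by (meson abs_ge_self abs_ge_zero divide_right_mono frac_le less_le_trans order.trans)
    finally show ?thesis .
  qed
  from this[of a b] this[of b a] show ?thesis using assms by (simp add: abs_minus_commute)
qed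

definition holder_on :: "real \<Rightarrow> real \<Rightarrow> real set \<Rightarrow> (real \<Rightarrow> real) \<Rightarrow> bool" where
  "holder_on \<delta> K S h \<longleftrightarrow> (\<forall>s\<in>S. \<forall>t\<in>S. \<bar>h s - h t\<bar> \<le> K * \<bar>s - t\<bar> powr \<delta>)"

lemma holder_onD: "holder_on \<delta> K S h \<Longrightarrow> s \<in> S \<Longrightarrow> t \<in> S \<Longrightarrow> \<bar>h s - h t\<bar> \<le> K * \<bar>s - t\<bar> powr \<delta>"
  unfolding holder_on_def by blast

lemma holder_on_transform:
  "holder_on \<delta> K S h \<Longrightarrow> (\<And>x. x \<in> S \<Longrightarrow> k x = h x) \<Longrightarrow> holder_on \<delta> K S k"
  unfolding holder_on_def by simp

lemma holder_on_add:
  "holder_on \<delta> A S h \<Longrightarrow> holder_on \<delta> B S k \<Longrightarrow> holder_on \<delta> (A + B) S (\<lambda>x. h x + k x)"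
  unfolding holder_on_def distrib_right by (smt (verit, best))

lemma holder_on_diff:
  "holder_on \<delta> A S h \<Longrightarrow> holder_on \<delta> B S k \<Longrightarrow> holder_on \<delta> (A + B) S (\<lambda>x. h x - k x)"
  unfolding holder_on_def distrib_right by (smt (verit, best))

lemma holder_on_I01_nonneg: "holder_on \<delta> K I01 h \<Longrightarrow> 0 \<le> K"
  using holder_onD[of \<delta> K I01 h 0 1] by simp

lemma holder_on_I01_bounded:
  assumes "holder_on \<delta> A I01 h" "\<bar>h 0\<bar> \<le> B" "0 \<le> \<delta>" "x \<in> I01"
  shows "\<bar>h x\<bar> \<le> A + B"
proof -
  have "A * \<bar>x - 0\<bar> powr \<delta> \<le> A * 1"
    using assms(3,4) holder_on_I01_nonneg[OF assms(1)] by (intro mult_left_mono powr_le1) auto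
  then show ?thesis using holder_onD[OF assms(1) assms(4), of 0] assms(2) by simp
qed

lemma lipschitz_on_imp_holder_on:
  assumes "K-lipschitz_on S h" "S \<subseteq> I01" "0 \<le> \<delta>" "\<delta> \<le> 1"
  shows "holder_on \<delta> K S h"
  unfolding holder_on_def
proof (intro ballI)
  fix s t assume st: "s \<in> S" "t \<in> S"
  have "\<bar>s - t\<bar> \<le> 1" using subsetD[OF assms(2) st(1)] subsetD[OF assms(2) st(2)] by auto
  then have "\<bar>s - t\<bar> \<le> \<bar>s - t\<bar> powr \<delta>"
    using powr_mono'[of \<delta> 1 "\<bar>s - t\<bar>"] assms(4) by (cases "s = t") auto
  then have "K * \<bar>s - t\<bar> \<le> K * \<bar>s - t\<bar> powr \<delta>"
    using lipschitz_on_nonneg[OF assms(1)] by (rule mult_left_mono)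
  then show "\<bar>h s - h t\<bar> \<le> K * \<bar>s - t\<bar> powr \<delta>"
    using lipschitz_onD[OF assms(1) st] by (simp add: dist_real_def)
qed

lemma holder_on_ln:
  assumes "holder_on \<delta> K S h" "0 < m" "\<And>x. x \<in> S \<Longrightarrow> m \<le> h x"
  shows "holder_on \<delta> (K / m) S (\<lambda>x. ln (h x))"
  unfolding holder_on_def
proof (intro ballI)
  fix s t assume st: "s \<in> S" "t \<in> S"
  have "\<bar>ln (h s) - ln (h t)\<bar> \<le> \<bar>h s - h t\<bar> / m"
    using abs_ln_diff_le assms(2,3) st by blast
  also have "\<dots> \<le> K * \<bar>s - t\<bar> powr \<delta> / m"
    using holder_onD[OF assms(1) st] assms(2) by (simp add: divide_right_mono)
  finally show "\<bar>ln (h s) - ln (h t)\<bar> \<le> K / m * \<bar>s - t\<bar> powr \<delta>" by simp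
qed

lemma exists_mesh_holder_le:
  assumes "0 < \<delta>" "0 < e"
  shows "\<exists>N>0. A * (1 / real N) powr \<delta> \<le> e"
proof -
  have "(\<lambda>N. A * (1 / real N) powr \<delta>) \<longlonglongrightarrow> 0"
    by (intro tendsto_mult_right_zero tendsto_zero_powrI[OF lim_const_over_n]) (use assms(1) in auto)
  then have "\<forall>\<^sub>F N in sequentially. A * (1 / real N) powr \<delta> < e"
    using assms(2) by (rule order_tendstoD(2))
  then have "\<forall>\<^sub>F N in sequentially. 0 < N \<and> A * (1 / real N) powr \<delta> \<le> e"
    using eventually_gt_at_top[of 0] by eventually_elim auto
  then obtain M where "\<forall>N\<ge>M. 0 < N \<and> A * (1 / real N) powr \<delta> \<le> e"
    unfolding eventually_sequentially by blast
  then show ?thesis by blast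
qed

lemma grid_point_near:
  fixes N :: nat
  assumes "0 < N" "s \<in> I01"
  shows "\<exists>i\<le>N. \<bar>s - real i / real N\<bar> \<le> 1 / real N"
proof (intro exI conjI)
  let ?i = "nat \<lfloor>s * real N\<rfloor>"
  have "0 \<le> s * real N" "s * real N \<le> real N"
    using assms by (auto simp: mult_left_le_one_le)
  then have "real ?i \<le> s * real N" "s * real N < real ?i + 1" "?i \<le> N"
    by linarith+
  then have "real ?i / real N \<le> s" "s < real ?i / real N + 1 / real N"
    using assms(1) by (simp_all add: field_simps)
  then show "?i \<le> N" "\<bar>s - real ?i / real N\<bar> \<le> 1 / real N"
    using \<open>?i \<le> N\<close> by auto
qed

lemma holder_on_small_on_grid:
  fixes N :: nat
  assumes "holder_on \<delta> K I01 u" "0 \<le> \<delta>" "0 < N" "K * (1 / real N) powr \<delta> \<le> e"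
    and "\<And>i. i \<le> N \<Longrightarrow> \<bar>u (real i / real N)\<bar> \<le> e" and "s \<in> I01"
  shows "\<bar>u s\<bar> \<le> 2 * e"
proof -
  obtain i where i: "i \<le> N" "\<bar>s - real i / real N\<bar> \<le> 1 / real N"
    using grid_point_near[OF assms(3,6)] by blast
  have x: "real i / real N \<in> I01" using i(1) assms(3) by (auto simp: field_simps)
  have "\<bar>u s - u (real i / real N)\<bar> \<le> K * \<bar>s - real i / real N\<bar> powr \<delta>"
    using holder_onD[OF assms(1) assms(6) x] .
  also have "\<dots> \<le> K * (1 / real N) powr \<delta>"
    using i(2) assms(2) holder_on_I01_nonneg[OF assms(1)] by (intro mult_left_mono powr_mono2) auto
  finally show ?thesis using assms(4) assms(5)[OF i(1)] by linarith
qed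

lemma floor_divide_in_range:
  fixes a e M :: real
  assumes "\<bar>a\<bar> \<le> M" "0 < e"
  shows "\<lfloor>a / e\<rfloor> \<in> {-\<lceil>M / e\<rceil>..\<lceil>M / e\<rceil>}"
proof -
  have "- (M / e) \<le> a / e" "a / e \<le> M / e"
    using assms by (auto simp: abs_le_iff field_simps)
  then have "- \<lceil>M / e\<rceil> \<le> \<lfloor>a / e\<rfloor>" "\<lfloor>a / e\<rfloor> \<le> \<lceil>M / e\<rceil>"
    using floor_mono floor_le_ceiling[of "M / e"] unfolding ceiling_def by fastforce+
  then show ?thesis by simp
qed

lemma abs_diff_less_if_floor_divide_eq:
  fixes a b e :: real
  assumes "\<lfloor>a / e\<rfloor> = \<lfloor>b / e\<rfloor>" "0 < e"
  shows "\<bar>a - b\<bar> < e"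
proof -
  have "\<bar>a / e - b / e\<bar> < 1"
    using assms(1) floor_correct[of "a / e"] floor_correct[of "b / e"] by linarith
  then show ?thesis using assms(2) by (simp add: diff_divide_distrib[symmetric] abs_divide)
qed

definition grid_code :: "nat \<Rightarrow> real \<Rightarrow> (real \<Rightarrow> real) \<Rightarrow> int list" where
  "grid_code N e h = map (\<lambda>i. \<lfloor>h (real i / real N) / e\<rfloor>) [0..<N+1]"

lemma grid_code_in_lists:
  assumes "0 < e" "\<And>i. i \<le> N \<Longrightarrow> \<bar>h (real i / real N)\<bar> \<le> M"
  shows "grid_code N e h \<in> {xs. set xs \<subseteq> {-\<lceil>M / e\<rceil>..\<lceil>M / e\<rceil>} \<and> length xs = N + 1}"
proof -
  have "z \<in> {-\<lceil>M / e\<rceil>..\<lceil>M / e\<rceil>}" if "z \<in> set (grid_code N e h)" for z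
  proof -
    from that obtain i where "i \<le> N" "z = \<lfloor>h (real i / real N) / e\<rfloor>"
      unfolding grid_code_def set_map set_upt by (auto simp: less_Suc_eq_le)
    then show ?thesis using floor_divide_in_range assms by blast
  qed
  then show ?thesis unfolding grid_code_def by auto
qed

lemma grid_code_eq_imp_close:
  assumes "grid_code N e h = grid_code N e k" "0 < e" "i \<le> N"
  shows "\<bar>h (real i / real N) - k (real i / real N)\<bar> \<le> e"
proof -
  have "\<lfloor>h (real i / real N) / e\<rfloor> = \<lfloor>k (real i / real N) / e\<rfloor>"
    using assms(1,3) unfolding grid_code_def map_eq_conv set_upt by (auto simp: less_Suc_eq_le)
  from abs_diff_less_if_floor_divide_eq[OF this assms(2)] show ?thesis by simp
qed

lemma finite_if_separated_holder_family:
  fixes H :: "'a \<Rightarrow> real \<Rightarrow> real"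
  assumes "0 < \<delta>" "0 < \<epsilon>"
    and holder: "\<And>g. g \<in> S \<Longrightarrow> holder_on \<delta> A I01 (H g)"
    and bounded: "\<And>g. g \<in> S \<Longrightarrow> \<bar>H g 0\<bar> \<le> B"
    and separated: "\<And>g1 g2. g1 \<in> S \<Longrightarrow> g2 \<in> S \<Longrightarrow> g1 \<noteq> g2 \<Longrightarrow> \<exists>s\<in>I01. \<epsilon> < \<bar>H g1 s - H g2 s\<bar>"
  shows "finite S"
proof -
  define e where "e = \<epsilon> / 2"
  have "0 < e" using assms(2) unfolding e_def by simp
  obtain N :: nat where N: "0 < N" "(A + A) * (1 / real N) powr \<delta> \<le> e"
    using exists_mesh_holder_le[OF assms(1) \<open>0 < e\<close>] by blast
  let ?q = "\<lambda>g. grid_code N e (H g)"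
  have "real i / real N \<in> I01" if "i \<le> N" for i
    using that N(1) by (auto simp: field_simps)
  then have "?q g \<in> {xs. set xs \<subseteq> {-\<lceil>(A + B) / e\<rceil>..\<lceil>(A + B) / e\<rceil>} \<and> length xs = N + 1}"
    if "g \<in> S" for g
    using holder_on_I01_bounded[OF holder[OF that] bounded[OF that]] assms(1)
    by (intro grid_code_in_lists[OF \<open>0 < e\<close>]) simp
  then have "?q ` S \<subseteq> {xs. set xs \<subseteq> {-\<lceil>(A + B) / e\<rceil>..\<lceil>(A + B) / e\<rceil>} \<and> length xs = N + 1}"
    by blast
  then have "finite (?q ` S)"
    by (rule finite_subset) (rule finite_lists_length_eq, simp)
  moreover have "inj_on ?q S"
  proof (rule inj_onI, rule ccontr)
    fix g1 g2 assume g: "g1 \<in> S" "g2 \<in> S" "?q g1 = ?q g2" "g1 \<noteq> g2"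
    have "\<bar>H g1 s - H g2 s\<bar> \<le> 2 * e" if "s \<in> I01" for s
      using holder_on_small_on_grid[OF holder_on_diff[OF holder[OF g(1)] holder[OF g(2)]] _ N
          grid_code_eq_imp_close[OF g(3) \<open>0 < e\<close>] that] assms(1)
      by simp
    moreover obtain s where "s \<in> I01" "\<epsilon> < \<bar>H g1 s - H g2 s\<bar>"
      using separated[OF g(1,2,4)] by blast
    ultimately show False unfolding e_def by fastforce
  qed
  ultimately show ?thesis using finite_imageD by blast
qed

lemma SUP_abs_le_if_comp_le:
  fixes u :: "real \<Rightarrow> real"
  assumes "f ` I01 = I01" "\<And>s. s \<in> I01 \<Longrightarrow> \<bar>u (f s)\<bar> \<le> r"
  shows "(SUP t\<in>I01. \<bar>u t\<bar>) \<le> r"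
proof (rule cSUP_least)
  fix t assume "t \<in> I01"
  with assms(1) obtain s where "s \<in> I01" "t = f s" by blast
  then show "\<bar>u t\<bar> \<le> r" using assms(2) by simp
qed simp

lemma Diff1d_holder_on_ln_dI:
  assumes "f \<in> Diff1d \<delta>" shows "\<exists>L. holder_on \<delta> L I01 (\<lambda>t. ln (dI f t))"
proof -
  obtain K where K: "holder_on \<delta> K I01 (dI f)"
    using assms unfolding Diff1d_def holder_on_def by blast
  obtain m where "0 < m" "\<forall>t\<in>I01. m \<le> dI f t"
    using Diff1p_dI_lower_bound assms unfolding Diff1d_def by blast
  then show ?thesis using holder_on_ln[OF K] by blast
qed

lemma holder_on_ln_dI_comp:
  assumes "f \<in> Diff1p" "g \<in> Diff1p" "Ck_on_I 2 g" "0 \<le> \<delta>" "\<delta> \<le> 1"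
  shows "\<exists>K. holder_on \<delta> K I01 (\<lambda>s. ln (dI g (f s)))"
proof -
  have f: "Ck_on_I 1 f" "f ` I01 = I01" using assms(1) unfolding Diff1p_def bij_betw_def by auto
  obtain Lf where Lf: "Lf-lipschitz_on I01 f" using C1_on_I_lipschitz[OF f(1)] ..
  obtain Mg where Mg: "Mg-lipschitz_on I01 (dI g)"
    using C1_on_I_lipschitz[OF Ck_on_I_Suc_dI] assms(3) by (metis Suc_1)
  have "(Mg * Lf)-lipschitz_on I01 (dI g \<circ> f)"
    using lipschitz_on_compose[OF Lf, of Mg "dI g"] Mg f(2) by simp
  then have "holder_on \<delta> (Mg * Lf) I01 (\<lambda>s. dI g (f s))"
    using assms(4,5) unfolding o_def by (intro lipschitz_on_imp_holder_on) simp_all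
  moreover obtain m where "0 < m" "\<forall>t\<in>I01. m \<le> dI g t"
    using Diff1p_dI_lower_bound[OF assms(2)] by blast
  moreover have "f s \<in> I01" if "s \<in> I01" for s using f(2) that by blast
  ultimately have "holder_on \<delta> (Mg * Lf / m) I01 (\<lambda>s. ln (dI g (f s)))"
    using holder_on_ln[of \<delta> "Mg * Lf" I01 "\<lambda>s. dI g (f s)" m] by auto
  then show ?thesis by auto
qed

(* The a priori bound K is needed because the supremum in p_delta is unspecified for a set of
   reals that is not bounded above. *)
lemma p_delta_le_imp_holder_on_ln_dI:
  assumes "holder_on \<delta> K I01 (\<lambda>t. ln (dI h t))" "p_delta \<delta> h \<le> C"
  shows "holder_on \<delta> C I01 (\<lambda>t. ln (dI h t))"
  unfolding holder_on_def
proof (intro ballI)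
  define P where "P = {(t1, t2). t1 \<in> I01 \<and> t2 \<in> I01 \<and> t1 \<noteq> t2}"
  define Q where "Q p = \<bar>ln (dI h (snd p)) - ln (dI h (fst p))\<bar> / \<bar>snd p - fst p\<bar> powr \<delta>"
    for p :: "real \<times> real"
  have "Q p \<le> K" if "p \<in> P" for p
    using that holder_onD[OF assms(1)] unfolding P_def Q_def
    by (auto simp: divide_le_eq abs_minus_commute)
  then have "Q p \<le> Sup (Q ` P)" if "p \<in> P" for p
    using that by (meson bdd_aboveI2 cSUP_upper)
  moreover have "p_delta \<delta> h = \<bar>ln (dI h 0)\<bar> + Sup (Q ` P)"
    unfolding p_delta_def P_def Q_def by simp
  ultimately have QC: "Q p \<le> C" if "p \<in> P" for p
    using that assms(2) by fastforce
  fix s t assume "s \<in> I01" "t \<in> I01"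
  then show "\<bar>ln (dI h s) - ln (dI h t)\<bar> \<le> C * \<bar>s - t\<bar> powr \<delta>"
    using QC[of "(t, s)"] unfolding P_def Q_def by (cases "s = t") (auto simp: divide_le_eq)
qed

lemma p_delta_comp_le_imp_holder_on:
  assumes f: "f \<in> Diff1p" "holder_on \<delta> L I01 (\<lambda>t. ln (dI f t))"
    and g: "g \<in> Diff1p" "Ck_on_I 2 g"
    and "0 \<le> \<delta>" "\<delta> \<le> 1" "p_delta \<delta> (g \<circ> f) \<le> C"
  shows "holder_on \<delta> (C + L) I01 (\<lambda>s. ln (dI g (f s)))"
proof -
  have "f ` I01 \<subseteq> I01" "Ck_on_I 1 f" "Ck_on_I 1 g"
    using f(1) g(1) unfolding Diff1p_def bij_betw_def by auto
  have ln_dI_comp: "ln (dI (g \<circ> f) t) = ln (dI g (f t)) + ln (dI f t)" if "t \<in> I01" for t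
  proof -
    have "f t \<in> I01" using that \<open>f ` I01 \<subseteq> I01\<close> by blast
    then have "0 < dI g (f t)" "0 < dI f t"
      using Diff1p_dI_pos[OF g(1)] Diff1p_dI_pos[OF f(1)] that by auto
    then show ?thesis
      using dI_comp[OF \<open>Ck_on_I 1 f\<close> \<open>Ck_on_I 1 g\<close> \<open>f ` I01 \<subseteq> I01\<close> that] by (simp add: ln_mult)
  qed
  obtain K where "holder_on \<delta> K I01 (\<lambda>s. ln (dI g (f s)))"
    using holder_on_ln_dI_comp[OF f(1) g] assms(5,6) by blast
  from holder_on_add[OF this f(2)]
  have "holder_on \<delta> (K + L) I01 (\<lambda>t. ln (dI (g \<circ> f) t))"
    by (rule holder_on_transform) (rule ln_dI_comp)
  from p_delta_le_imp_holder_on_ln_dI[OF this assms(7)]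
  have "holder_on \<delta> (C + L) I01 (\<lambda>t. ln (dI (g \<circ> f) t) - ln (dI f t))"
    using f(2) by (rule holder_on_diff)
  then show ?thesis
    by (rule holder_on_transform) (simp add: ln_dI_comp)
qed

theorem mainTheorem15:
  fixes \<delta> :: real and f :: "real \<Rightarrow> real" and G :: "(real \<Rightarrow> real) set"
  assumes "0 < \<delta>" and "\<delta> < 1/2"
    and "f \<in> Diff1d \<delta>"
    and "G \<subseteq> Diff03"
    and "\<exists>c>0. \<forall>g1\<in>G. \<forall>g2\<in>G. g1 \<noteq> g2 \<longrightarrow>
            (SUP t\<in>I01. \<bar>ln (dI g1 t) - ln (dI g2 t)\<bar>) \<ge> c"
  shows "\<forall>C>0. finite {g \<in> G. p_delta \<delta> (g \<circ> f) \<le> C}"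
proof (intro allI impI)
  fix C :: real assume "C > 0"
  obtain c where "c > 0" and sep: "\<And>g1 g2. g1 \<in> G \<Longrightarrow> g2 \<in> G \<Longrightarrow> g1 \<noteq> g2 \<Longrightarrow>
      c \<le> (SUP t\<in>I01. \<bar>ln (dI g1 t) - ln (dI g2 t)\<bar>)"
    using assms(5) by blast
  obtain L where L: "holder_on \<delta> L I01 (\<lambda>t. ln (dI f t))"
    using Diff1d_holder_on_ln_dI[OF assms(3)] by blast
  have f: "f \<in> Diff1p" "f ` I01 = I01" "f 0 = 0"
    using assms(3) unfolding Diff1d_def Diff1p_def bij_betw_def by auto
  have G: "g \<in> Diff1p" "Ck_on_I 2 g" "dI g 0 = 1" if "g \<in> G" for g
    using that assms(4) Diff03_subset_Diff1p Ck_on_I_mono[of 2 3 g] unfolding Diff03_def by auto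
  let ?S = "{g \<in> G. p_delta \<delta> (g \<circ> f) \<le> C}"
  have holder: "holder_on \<delta> (C + L) I01 (\<lambda>s. ln (dI g (f s)))" if "g \<in> ?S" for g
    using p_delta_comp_le_imp_holder_on[OF f(1) L G(1,2)] that assms(1,2) by simp
  have vanish: "\<bar>ln (dI g (f 0))\<bar> \<le> 0" if "g \<in> ?S" for g
    using G(3) that f(3) by simp
  have separated: "\<exists>s\<in>I01. c / 2 < \<bar>ln (dI g1 (f s)) - ln (dI g2 (f s))\<bar>"
    if "g1 \<in> ?S" "g2 \<in> ?S" "g1 \<noteq> g2" for g1 g2
  proof (rule ccontr)
    assume "\<not> ?thesis"
    then have "(SUP t\<in>I01. \<bar>ln (dI g1 t) - ln (dI g2 t)\<bar>) \<le> c / 2"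
      by (intro SUP_abs_le_if_comp_le[OF f(2)]) (simp add: not_less)
    then show False using sep[of g1 g2] that \<open>c > 0\<close> by simp
  qed
  show "finite ?S"
    using \<open>c > 0\<close> by (intro finite_if_separated_holder_family[OF assms(1) _ holder vanish separated]) simp
qed

end
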